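(* Suppose each $f_v$ is $K_v$-Lipschitz. Then for every partition $\mathcal P$ of $V(G)$ into sets of size $r$ and $T=T_{\vec B,\mathcal P}$, $$|\mathbb E_{\vec B}(\xi)|\le\frac1{nr(r-1)}\sum_{v\in V(G)}\frac{|\mathcal P_v\cap\mathcal N(v)|}{d(v)}K_v.$$
   Context: Let $n,p,q$ be positive integers, $r=p+q$, $G$ a finite simple graph with $|V(G)|=rn$ and no isolated vertices; $\mathcal N(v)$, $d(v)$ neighbor set and degree. For each $v$, $f_v:2^{\mathcal N(v)}\to\mathbb R$ with $f_v(\emptyset)=0$. $\sigma_T(v)=q$ if $v\in T$, $-p$ otherwise; for $|T|=pn$, $\xi=\frac1{pqn}\sum_v\sigma_T(v)f_v(T\cap\mathcal N(v))$. $f_v$ is $K_v$-Lipschitz ($K_v>0$) if $|f_v(A)-f_v(A')|\le K_v|A\triangle A'|/d(v)$ for all $A,A'\subseteq\mathcal N(v)$. Restricted randomization: for $\mathcal P=(S_1,\dots,S_n)$, $S_i=\{w_i^1,\dots,w_i^r\}$, $B_1,\dots,B_n$ i.i.d. uniform $p$-subsets of $\{1,\dots,r\}$, $T_{\vec B,\mathcal P}=\{w_i^j:j\in B_i\}$; $\mathcal P_v$ is the block containing $v$. *)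

theory Defs
  imports "HOL-Probability.Probability"
begin

definition simple_graph :: "'a set \<Rightarrow> ('a \<Rightarrow> 'a \<Rightarrow> bool) \<Rightarrow> bool" where
  "simple_graph V E \<longleftrightarrow> finite V \<and> (\<forall>u v. E u v \<longrightarrow> E v u) \<and> (\<forall>v. \<not> E v v)
      \<and> (\<forall>u v. E u v \<longrightarrow> u \<in> V \<and> v \<in> V)"

definition nbhd :: "'a set \<Rightarrow> ('a \<Rightarrow> 'a \<Rightarrow> bool) \<Rightarrow> 'a \<Rightarrow> 'a set" where
  "nbhd V E v = {u \<in> V. E v u}"

definition deg :: "'a set \<Rightarrow> ('a \<Rightarrow> 'a \<Rightarrow> bool) \<Rightarrow> 'a \<Rightarrow> nat" where
  "deg V E v = card (nbhd V E v)"

definition lipschitz_fv ::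
  "'a set \<Rightarrow> ('a \<Rightarrow> 'a \<Rightarrow> bool) \<Rightarrow> ('a set \<Rightarrow> real) \<Rightarrow> real \<Rightarrow> 'a \<Rightarrow> bool" where
  "lipschitz_fv V E fv K v \<longleftrightarrow>
     (\<forall>A A'. A \<subseteq> nbhd V E v \<longrightarrow> A' \<subseteq> nbhd V E v \<longrightarrow>
        \<bar>fv A - fv A'\<bar> \<le> K * real (card ((A - A') \<union> (A' - A))) / real (deg V E v))"

definition sigma :: "nat \<Rightarrow> nat \<Rightarrow> 'a set \<Rightarrow> 'a \<Rightarrow> real" where
  "sigma p q T v = (if v \<in> T then real q else - real p)"

definition xi :: "nat \<Rightarrow> nat \<Rightarrow> nat \<Rightarrow> 'a set \<Rightarrow> ('a \<Rightarrow> 'a \<Rightarrow> bool)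
                   \<Rightarrow> ('a \<Rightarrow> 'a set \<Rightarrow> real) \<Rightarrow> 'a set \<Rightarrow> real" where
  "xi n p q V E f T =
     (1 / (real p * real q * real n)) * (\<Sum>v\<in>V. sigma p q T v * f v (T \<inter> nbhd V E v))"

text \<open>Restricted randomization. The partition P = (S_0,...,S_{n-1}) with
S_i = {w i 1, ..., w i r} is given by w; B ranges over the choices of one
p-subset of {1..r} for each block i < n.\<close>

definition choices :: "nat \<Rightarrow> nat \<Rightarrow> nat \<Rightarrow> (nat \<Rightarrow> nat set) set" where
  "choices n p r = PiE {..<n} (\<lambda>_. {A. A \<subseteq> {1..r} \<and> card A = p})"

definition T_of :: "(nat \<Rightarrow> nat \<Rightarrow> 'a) \<Rightarrow> nat \<Rightarrow> (nat \<Rightarrow> nat set) \<Rightarrow> 'a set" where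
  "T_of w n B = {w i j | i j. i < n \<and> j \<in> B i}"

text \<open>Expectation over B_1,...,B_n i.i.d. uniform p-subsets of {1..r}
(i.e. uniform distribution on the product set).\<close>
definition expect_B :: "nat \<Rightarrow> nat \<Rightarrow> nat \<Rightarrow> ((nat \<Rightarrow> nat set) \<Rightarrow> real) \<Rightarrow> real" where
  "expect_B n p r X = measure_pmf.expectation (pmf_of_set (choices n p r)) X"

definition block_of :: "(nat \<Rightarrow> nat \<Rightarrow> 'a) \<Rightarrow> nat \<Rightarrow> nat \<Rightarrow> 'a \<Rightarrow> 'a set" where
  "block_of w n r v = (\<Union>i\<in>{i. i < n \<and> v \<in> w i ` {1..r}}. w i ` {1..r})"

end

theory Submission
  imports Defs
begin

text \<open>
  Fix a vertex \<open>v = w i a\<close> and write \<open>F B = f v (T \<inter> N(v))\<close>. Up to normalisation, the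
  contribution of \<open>v\<close> to the expectation of \<open>\<xi>\<close> is \<open>q \<Sum>{F B | a \<in> B i} - p \<Sum>{F B | a \<notin> B i}\<close>.
  Every choice with \<open>a \<in> B i\<close> has exactly \<open>q\<close> partners obtained by swapping \<open>a\<close> for some
  \<open>b \<notin> B i\<close>, and every choice with \<open>a \<notin> B i\<close> arises exactly \<open>p\<close> times in this way, so the
  signed sum is the sum of \<open>F B - F B'\<close> over swap pairs. A swap changes \<open>T\<close> only at
  \<open>w i a \<notin> N(v)\<close> and at \<open>w i b\<close>, so by the Lipschitz condition each term is at most
  \<open>K v / d(v)\<close>, and vanishes unless \<open>w i b \<in> N(v)\<close>. Counting the swap pairs with a given \<open>b\<close>
  and comparing with the number of all choices gives the factor \<open>1 / (n r (r - 1))\<close>.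
\<close>

lemma card_subsets_mem_not_mem:
  assumes "finite S" "a \<in> S" "b \<in> S" "a \<noteq> b" "k > 0"
  shows "card {A. A \<subseteq> S \<and> card A = k \<and> a \<in> A \<and> b \<notin> A} = (card S - 2) choose (k - 1)"
proof -
  let ?D = "{A. A \<subseteq> S - {a, b} \<and> card A = k - 1}"
  have "{A. A \<subseteq> S \<and> card A = k \<and> a \<in> A \<and> b \<notin> A} = insert a ` ?D"
  proof (intro equalityI subsetI)
    fix X assume X: "X \<in> insert a ` ?D"
    then have "finite (X - {a})" using assms(1) by (auto intro: finite_subset)
    with X assms show "X \<in> {A. A \<subseteq> S \<and> card A = k \<and> a \<in> A \<and> b \<notin> A}"
      by (auto simp: card_insert_if)
  next
    fix X assume X: "X \<in> {A. A \<subseteq> S \<and> card A = k \<and> a \<in> A \<and> b \<notin> A}"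
    then have "X - {a} \<in> ?D" using assms(1) by (auto intro: finite_subset)
    moreover have "X = insert a (X - {a})" using X by auto
    ultimately show "X \<in> insert a ` ?D" by blast
  qed
  moreover have "inj_on (insert a) ?D"
    by (rule inj_onI) (metis Diff_iff Diff_insert_absorb insertCI mem_Collect_eq subset_iff)
  moreover have "card (S - {a, b}) = card S - 2"
    using assms by (simp add: card_Diff_subset)
  ultimately show ?thesis
    using n_subsets[of "S - {a, b}" "k - 1"] assms(1) by (simp add: card_image)
qed

lemma card_PiE_filter_coordinate:
  assumes "finite I" "i0 \<in> I"
  shows "card {B \<in> PiE I F. P (B i0)} = card {x \<in> F i0. P x} * (\<Prod>i\<in>I - {i0}. card (F i))"
proof -
  have "{B \<in> PiE I F. P (B i0)} = PiE I (\<lambda>i. if i = i0 then {x \<in> F i. P x} else F i)"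
    using assms(2) by (auto simp: PiE_iff extensional_def split: if_splits)
  then have "card {B \<in> PiE I F. P (B i0)} = (\<Prod>i\<in>I. card (if i = i0 then {x \<in> F i. P x} else F i))"
    by (simp add: card_PiE assms(1))
  also have "\<dots> = card {x \<in> F i0. P x} * (\<Prod>i\<in>I - {i0}. card (F i))"
    using assms by (simp add: prod.remove)
  finally show ?thesis .
qed

lemma binomial_add_mult_mult:
  assumes "p > 0" "q > 0"
  shows "((p + q) choose p) * p * q = (p + q) * (p + q - 1) * ((p + q - 2) choose (p - 1))"
proof -
  obtain p' q' where pq: "p = Suc p'" "q = Suc q'" using assms by (metis gr0_implies_Suc)
  have "((p + q) choose p) * p = (p + q) * ((p + q - 1) choose p')"
    using Suc_times_binomial_eq[of "p' + Suc q'" p'] by (simp add: pq)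
  moreover have "q * ((p + q - 1) choose p') = (p + q - 1) * ((p + q - 2) choose p')"
    using binomial_absorb_comp[of "p' + Suc q'" p'] by (simp add: pq)
  ultimately show ?thesis by (metis pq(1) diff_Suc_1 mult.assoc mult.commute)
qed

lemma finite_choices: "finite (choices n p r)"
  unfolding choices_def by (rule finite_PiE) auto

lemma card_choices: "card (choices n p r) = (r choose p) ^ n"
  using n_subsets[of "{1..r}" p] by (simp add: choices_def card_PiE)

lemma choicesD:
  assumes "B \<in> choices n p r" "i < n"
  shows "B i \<subseteq> {1..r}" "card (B i) = p" "finite (B i)"
  using assms finite_subset[of "B i" "{1..r}"] by (auto simp: choices_def PiE_iff)

lemma card_choices_mem_not_mem:
  assumes "i < n" "a \<in> {1..r}" "b \<in> {1..r}" "a \<noteq> b" "p > 0"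
  shows "card {B \<in> choices n p r. a \<in> B i \<and> b \<notin> B i}
    = ((r - 2) choose (p - 1)) * (r choose p) ^ (n - 1)"
proof -
  have "{x \<in> {A. A \<subseteq> {1..r} \<and> card A = p}. a \<in> x \<and> b \<notin> x}
      = {A. A \<subseteq> {1..r} \<and> card A = p \<and> a \<in> A \<and> b \<notin> A}"
    by blast
  then show ?thesis
    using assms card_PiE_filter_coordinate[of "{..<n}" i "\<lambda>_. {A. A \<subseteq> {1..r} \<and> card A = p}"
        "\<lambda>A. a \<in> A \<and> b \<notin> A"]
      card_subsets_mem_not_mem[of "{1..r}" a b p] n_subsets[of "{1..r}" p]
    by (simp add: choices_def card_Diff_singleton)
qed

lemma card_choices_mult_eq:
  assumes "n > 0" "p > 0" "q > 0"
  shows "real p * real q * real n * real (card (choices n p (p + q)))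
    = real (((p + q - 2) choose (p - 1)) * (p + q choose p) ^ (n - 1))
      * (real n * real (p + q) * (real (p + q) - 1))"
proof -
  have "(p + q choose p) ^ n = (p + q choose p) * (p + q choose p) ^ (n - 1)"
    using assms(1) by (metis Suc_diff_1 power_Suc)
  then have "p * q * n * card (choices n p (p + q))
      = ((p + q - 2) choose (p - 1)) * (p + q choose p) ^ (n - 1) * (n * (p + q) * (p + q - 1))"
    using binomial_add_mult_mult[OF assms(2,3)] by (simp add: card_choices ac_simps)
  moreover have "real (p + q - 1) = real (p + q) - 1"
    using assms(2) by simp
  ultimately show ?thesis
    by (metis of_nat_mult)
qed

definition swap_at :: "nat \<Rightarrow> nat \<Rightarrow> nat \<Rightarrow> (nat \<Rightarrow> nat set) \<Rightarrow> nat \<Rightarrow> nat set" where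
  "swap_at i a b B = B(i := insert b (B i - {a}))"

lemma swap_at_in_choices:
  assumes "B \<in> choices n p r" "i < n" "a \<in> B i" "b \<notin> B i" "b \<in> {1..r}"
  shows "swap_at i a b B \<in> choices n p r"
proof -
  have "p > 0"
    using choicesD[OF assms(1,2)] assms(3) card_gt_0_iff by blast
  then have "card (insert b (B i - {a})) = p"
    using choicesD[OF assms(1,2)] assms(3,4) by (simp add: card_Diff_singleton)
  moreover have "insert b (B i - {a}) \<subseteq> {1..r}"
    using choicesD[OF assms(1,2)] assms(5) by blast
  ultimately show ?thesis
    using assms(1,2) PiE_fun_upd[of "insert b (B i - {a})" _ i B "{..<n}"]
    by (simp add: swap_at_def choices_def insert_absorb)
qed

lemma bij_betw_swap_at:
  assumes "i < n" "a \<in> {1..r}"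
  shows "bij_betw (\<lambda>(B, b). (swap_at i a b B, b))
    (SIGMA B:{B \<in> choices n p r. a \<in> B i}. {1..r} - B i)
    (SIGMA B:{B \<in> choices n p r. a \<notin> B i}. B i)"
proof (rule bij_betw_byWitness[where f' = "\<lambda>(B, b). (swap_at i b a B, b)"])
  show "\<forall>x \<in> SIGMA B:{B \<in> choices n p r. a \<in> B i}. {1..r} - B i.
      (\<lambda>(B, b). (swap_at i b a B, b)) ((\<lambda>(B, b). (swap_at i a b B, b)) x) = x"
    by (auto simp: swap_at_def insert_absorb)
  show "\<forall>x \<in> SIGMA B:{B \<in> choices n p r. a \<notin> B i}. B i.
      (\<lambda>(B, b). (swap_at i a b B, b)) ((\<lambda>(B, b). (swap_at i b a B, b)) x) = x"
    by (auto simp: swap_at_def insert_absorb)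
  show "(\<lambda>(B, b). (swap_at i a b B, b)) ` (SIGMA B:{B \<in> choices n p r. a \<in> B i}. {1..r} - B i)
      \<subseteq> (SIGMA B:{B \<in> choices n p r. a \<notin> B i}. B i)"
    using assms swap_at_in_choices by (auto simp: swap_at_def)
  show "(\<lambda>(B, b). (swap_at i b a B, b)) ` (SIGMA B:{B \<in> choices n p r. a \<notin> B i}. B i)
      \<subseteq> (SIGMA B:{B \<in> choices n p r. a \<in> B i}. {1..r} - B i)"
    using assms swap_at_in_choices choicesD by (fastforce simp: swap_at_def)
qed

lemma sum_choices_switching:
  fixes F :: "(nat \<Rightarrow> nat set) \<Rightarrow> real"
  assumes "i < n" "a \<in> {1..p + q}"
  shows "(\<Sum>B\<in>choices n p (p + q). (if a \<in> B i then real q else - real p) * F B)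
    = (\<Sum>(B, b) \<in> (SIGMA B:{B \<in> choices n p (p + q). a \<in> B i}. {1..p + q} - B i).
        F B - F (swap_at i a b B))"
proof -
  define C where "C = choices n p (p + q)"
  define X where "X = (SIGMA B:{B \<in> C. a \<in> B i}. {1..p + q} - B i)"
  define Y where "Y = (SIGMA B:{B \<in> C. a \<notin> B i}. B i)"
  have fin: "finite C" unfolding C_def by (rule finite_choices)
  have "(\<Sum>B\<in>C. (if a \<in> B i then real q else - real p) * F B)
      = (\<Sum>B\<in>C. if a \<in> B i then real q * F B else - (real p * F B))"
    by (rule sum.cong) simp_all
  also have "\<dots> = (\<Sum>B \<in> {B \<in> C. a \<in> B i}. real q * F B) - (\<Sum>B \<in> {B \<in> C. a \<notin> B i}. real p * F B)"
    by (simp add: sum.If_cases[OF fin] sum_negf Int_def)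
  also have "(\<Sum>B \<in> {B \<in> C. a \<in> B i}. real q * F B) = (\<Sum>(B, b) \<in> X. F B)"
    unfolding X_def using fin choicesD[OF _ assms(1), of _ p "p + q"]
    by (subst sum.Sigma[symmetric]) (auto intro!: sum.cong simp: C_def card_Diff_subset)
  also have "(\<Sum>B \<in> {B \<in> C. a \<notin> B i}. real p * F B) = (\<Sum>(B, b) \<in> Y. F B)"
    unfolding Y_def using fin choicesD[OF _ assms(1), of _ p "p + q"]
    by (subst sum.Sigma[symmetric]) (auto intro!: sum.cong simp: C_def)
  also have "\<dots> = (\<Sum>(B, b) \<in> X. F (swap_at i a b B))"
    using sum.reindex_bij_betw[OF bij_betw_swap_at[OF assms], of "\<lambda>(B, b). F B"]
    by (simp add: X_def Y_def C_def case_prod_unfold)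
  finally show ?thesis
    unfolding X_def C_def by (simp add: sum_subtractf case_prod_unfold)
qed

lemma T_of_mem_iff:
  assumes "inj_on (\<lambda>(i, j). w i j) ({..<n} \<times> {1..r})"
    and "B \<in> choices n p r" "i < n" "j \<in> {1..r}"
  shows "w i j \<in> T_of w n B \<longleftrightarrow> j \<in> B i"
proof
  assume "w i j \<in> T_of w n B"
  then obtain k l where "w i j = w k l" "k < n" "l \<in> B k"
    unfolding T_of_def by blast
  moreover have "l \<in> {1..r}" using choicesD(1)[OF assms(2) \<open>k < n\<close>] \<open>l \<in> B k\<close> by blast
  ultimately show "j \<in> B i"
    using inj_onD[OF assms(1), of "(i, j)" "(k, l)"] assms(3,4) by auto
qed (use assms(3) in \<open>auto simp: T_of_def\<close>)

lemma T_of_swap_at_diff: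
  "T_of w n B - T_of w n (swap_at i a b B) \<subseteq> {w i a}"
  "T_of w n (swap_at i a b B) - T_of w n B \<subseteq> {w i b}"
  unfolding T_of_def swap_at_def by auto

lemma abs_diff_swap_at_le:
  fixes G :: "'a set \<Rightarrow> real"
  assumes lip: "\<forall>A A'. A \<subseteq> N \<longrightarrow> A' \<subseteq> N \<longrightarrow> \<bar>G A - G A'\<bar> \<le> L * real (card (sym_diff A A'))"
    and "L \<ge> 0" "w i a \<notin> N"
  shows "\<bar>G (T_of w n B \<inter> N) - G (T_of w n (swap_at i a b B) \<inter> N)\<bar> \<le> L * of_bool (w i b \<in> N)"
proof -
  let ?A = "T_of w n B \<inter> N" and ?A' = "T_of w n (swap_at i a b B) \<inter> N"
  have "sym_diff ?A ?A' \<subseteq> {w i b} \<inter> N"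
    using T_of_swap_at_diff[where w = w and n = n and B = B and i = i and a = a and b = b] assms(3) by blast
  then have "card (sym_diff ?A ?A') \<le> card ({w i b} \<inter> N)"
    by (intro card_mono) auto
  also have "\<dots> = of_bool (w i b \<in> N)"
    by auto
  finally have "card (sym_diff ?A ?A') \<le> of_bool (w i b \<in> N)" .
  then have "L * real (card (sym_diff ?A ?A')) \<le> L * of_bool (w i b \<in> N)"
    using assms(2) by (intro mult_left_mono) auto
  moreover have "\<bar>G ?A - G ?A'\<bar> \<le> L * real (card (sym_diff ?A ?A'))"
    by (rule lip[rule_format]) auto
  ultimately show ?thesis by linarith
qed

lemma abs_sum_choices_sigma_le:
  fixes G :: "'a set \<Rightarrow> real"
  assumes inj: "inj_on (\<lambda>(i, j). w i j) ({..<n} \<times> {1..p + q})"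
    and "p > 0" "i < n" "a \<in> {1..p + q}" "w i a \<notin> N" "L \<ge> 0"
    and lip: "\<forall>A A'. A \<subseteq> N \<longrightarrow> A' \<subseteq> N \<longrightarrow> \<bar>G A - G A'\<bar> \<le> L * real (card (sym_diff A A'))"
  shows "\<bar>\<Sum>B\<in>choices n p (p + q). sigma p q (T_of w n B) (w i a) * G (T_of w n B \<inter> N)\<bar>
    \<le> real (((p + q - 2) choose (p - 1)) * (p + q choose p) ^ (n - 1))
        * (L * real (card {j \<in> {1..p + q}. w i j \<in> N}))"
proof -
  define r where "r = p + q"
  define C where "C = choices n p r"
  define cnt where "cnt = ((r - 2) choose (p - 1)) * (r choose p) ^ (n - 1)"
  define F where "F B = G (T_of w n B \<inter> N)" for B
  define g where "g b = L * of_bool (w i b \<in> N)" for b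
  have fin: "finite C" unfolding C_def by (rule finite_choices)
  have "(\<Sum>B\<in>C. sigma p q (T_of w n B) (w i a) * G (T_of w n B \<inter> N))
      = (\<Sum>B\<in>C. (if a \<in> B i then real q else - real p) * F B)"
    using T_of_mem_iff[OF inj[folded r_def] _ assms(3,4)[folded r_def]]
    by (intro sum.cong) (auto simp: sigma_def F_def C_def)
  also have "\<dots> = (\<Sum>(B, b) \<in> (SIGMA B:{B \<in> C. a \<in> B i}. {1..r} - B i). F B - F (swap_at i a b B))"
    unfolding C_def r_def by (rule sum_choices_switching[OF assms(3,4)])
  finally have "\<bar>\<Sum>B\<in>C. sigma p q (T_of w n B) (w i a) * G (T_of w n B \<inter> N)\<bar>
      \<le> (\<Sum>(B, b) \<in> (SIGMA B:{B \<in> C. a \<in> B i}. {1..r} - B i). \<bar>F B - F (swap_at i a b B)\<bar>)"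
    by (simp add: case_prod_unfold sum_abs)
  also have "\<dots> \<le> (\<Sum>(B, b) \<in> (SIGMA B:{B \<in> C. a \<in> B i}. {1..r} - B i). g b)"
    unfolding F_def g_def case_prod_unfold
    by (intro sum_mono abs_diff_swap_at_le[where w = w and i = i and a = a, OF lip assms(6,5)])
  also have "\<dots> = (\<Sum>B \<in> {B \<in> C. a \<in> B i}. \<Sum>b \<in> {b \<in> {1..r}. b \<notin> B i}. g b)"
    using fin by (subst sum.Sigma) (auto intro!: sum.cong)
  also have "\<dots> = (\<Sum>b \<in> {1..r}. \<Sum>B \<in> {B \<in> C. a \<in> B i \<and> b \<notin> B i}. g b)"
    using fin by (subst sum.swap_restrict) (auto intro!: sum.cong)
  also have "\<dots> = (\<Sum>b \<in> {1..r}. real cnt * g b)"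
  proof (rule sum.cong)
    fix b assume "b \<in> {1..r}"
    then show "(\<Sum>B \<in> {B \<in> C. a \<in> B i \<and> b \<notin> B i}. g b) = real cnt * g b"
      using card_choices_mem_not_mem[OF assms(3) assms(4)[folded r_def] _ _ assms(2)] assms(5)
      by (cases "b = a") (auto simp: g_def C_def cnt_def)
  qed simp
  also have "\<dots> = real cnt * (L * real (card {j \<in> {1..r}. w i j \<in> N}))"
    by (simp add: g_def sum_distrib_left[symmetric] sum.If_cases of_bool_def Int_def)
  finally show ?thesis unfolding C_def cnt_def r_def .
qed

lemma expect_B_xi_eq:
  assumes "p \<le> r"
  shows "expect_B n p r (\<lambda>B. xi n p q V E f (T_of w n B))
    = (\<Sum>v\<in>V. \<Sum>B\<in>choices n p r. sigma p q (T_of w n B) v * f v (T_of w n B \<inter> nbhd V E v))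
      / (real p * real q * real n * real (card (choices n p r)))"
proof -
  have "choices n p r \<noteq> {}"
    using assms by (metis card_choices card.empty binomial_eq_0_iff not_less power_not_zero)
  then show ?thesis
    unfolding expect_B_def integral_pmf_of_set[OF \<open>choices n p r \<noteq> {}\<close> finite_choices]
    by (simp add: xi_def sum_distrib_left[symmetric] sum.swap[of _ V] sum_divide_distrib[symmetric])
qed

lemma block_of_eq:
  assumes "inj_on (\<lambda>(i, j). w i j) ({..<n} \<times> {1..r})" "i < n" "j \<in> {1..r}"
  shows "block_of w n r (w i j) = w i ` {1..r}"
proof -
  have "{k. k < n \<and> w i j \<in> w k ` {1..r}} = {i}"
    using assms inj_onD[OF assms(1), of "(i, j)"] by fastforce
  then show ?thesis unfolding block_of_def by simp
qed

lemma card_block_of_Int: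
  assumes "inj_on (\<lambda>(i, j). w i j) ({..<n} \<times> {1..r})" "i < n" "j \<in> {1..r}"
  shows "card (block_of w n r (w i j) \<inter> N) = card {k \<in> {1..r}. w i k \<in> N}"
proof -
  have "inj_on (w i) {1..r}"
  proof (rule inj_onI)
    fix x y assume "x \<in> {1..r}" "y \<in> {1..r}" "w i x = w i y"
    then show "x = y"
      using inj_onD[OF assms(1), of "(i, x)" "(i, y)"] assms(2) by auto
  qed
  then have "card (w i ` {k \<in> {1..r}. w i k \<in> N}) = card {k \<in> {1..r}. w i k \<in> N}"
    by (rule card_image[OF inj_on_subset]) auto
  moreover have "w i ` {1..r} \<inter> N = w i ` {k \<in> {1..r}. w i k \<in> N}"
    by blast
  ultimately show ?thesis
    by (simp add: block_of_eq[OF assms])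
qed

lemma abs_sum_choices_sigma_nbhd_le:
  assumes "simple_graph V E" "bij_betw (\<lambda>(i, j). w i j) ({..<n} \<times> {1..p + q}) V"
    and "p > 0" "v \<in> V" "K \<ge> 0" "lipschitz_fv V E g K v"
  shows "\<bar>\<Sum>B\<in>choices n p (p + q). sigma p q (T_of w n B) v * g (T_of w n B \<inter> nbhd V E v)\<bar>
    \<le> real (((p + q - 2) choose (p - 1)) * (p + q choose p) ^ (n - 1))
        * (real (card (block_of w n (p + q) v \<inter> nbhd V E v)) / real (deg V E v) * K)"
proof -
  have inj: "inj_on (\<lambda>(i, j). w i j) ({..<n} \<times> {1..p + q})"
    using assms(2) by (rule bij_betw_imp_inj_on)
  obtain i a where ia: "i < n" "a \<in> {1..p + q}" "v = w i a"
    using assms(2,4) by (auto simp: bij_betw_def)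
  have "w i a \<notin> nbhd V E v"
    using assms(1) ia(3) by (simp add: simple_graph_def nbhd_def)
  moreover have "K / real (deg V E v) \<ge> 0"
    using assms(5) by simp
  moreover have "\<forall>A A'. A \<subseteq> nbhd V E v \<longrightarrow> A' \<subseteq> nbhd V E v \<longrightarrow>
      \<bar>g A - g A'\<bar> \<le> K / real (deg V E v) * real (card (sym_diff A A'))"
    using assms(6) by (simp add: lipschitz_fv_def)
  ultimately have "\<bar>\<Sum>B\<in>choices n p (p + q). sigma p q (T_of w n B) (w i a) * g (T_of w n B \<inter> nbhd V E v)\<bar>
    \<le> real (((p + q - 2) choose (p - 1)) * (p + q choose p) ^ (n - 1))
        * (K / real (deg V E v) * real (card {j \<in> {1..p + q}. w i j \<in> nbhd V E v}))"
    by (rule abs_sum_choices_sigma_le[OF inj assms(3) ia(1,2)])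
  then show ?thesis
    unfolding ia(3) card_block_of_Int[OF inj ia(1,2)] by (simp add: ia(3) ac_simps)
qed

theorem mainTheorem10:
  fixes n p q :: nat and V :: "'a set" and E :: "'a \<Rightarrow> 'a \<Rightarrow> bool"
    and f :: "'a \<Rightarrow> 'a set \<Rightarrow> real" and K :: "'a \<Rightarrow> real"
    and w :: "nat \<Rightarrow> nat \<Rightarrow> 'a"
  assumes "n > 0" and "p > 0" and "q > 0"
    and "simple_graph V E"
    and "card V = (p + q) * n"
    and "\<forall>v\<in>V. deg V E v > 0"
    and "\<forall>v\<in>V. f v {} = 0"
    and "\<forall>v\<in>V. K v > 0"
    and "\<forall>v\<in>V. lipschitz_fv V E (f v) (K v) v"
    and "bij_betw (\<lambda>(i, j). w i j) ({..<n} \<times> {1..p + q}) V"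
  shows "\<bar>expect_B n p (p + q) (\<lambda>B. xi n p q V E f (T_of w n B))\<bar>
     \<le> 1 / (real n * real (p + q) * (real (p + q) - 1)) *
        (\<Sum>v\<in>V. real (card (block_of w n (p + q) v \<inter> nbhd V E v)) / real (deg V E v) * K v)"
proof -
  define cnt where "cnt = ((p + q - 2) choose (p - 1)) * (p + q choose p) ^ (n - 1)"
  define S where
    "S v = (\<Sum>B\<in>choices n p (p + q). sigma p q (T_of w n B) v * f v (T_of w n B \<inter> nbhd V E v))"
    for v
  define bound where
    "bound v = real (card (block_of w n (p + q) v \<inter> nbhd V E v)) / real (deg V E v) * K v" for v
  define D where "D = real n * real (p + q) * (real (p + q) - 1)"
  have expectation:
    "expect_B n p (p + q) (\<lambda>B. xi n p q V E f (T_of w n B)) = (\<Sum>v\<in>V. S v) / (real cnt * D)"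
    unfolding S_def cnt_def D_def
    by (simp only: expect_B_xi_eq[of p "p + q"] card_choices_mult_eq[OF assms(1-3)] le_add1)
  have "\<bar>S v\<bar> \<le> real cnt * bound v" if "v \<in> V" for v
    unfolding S_def bound_def cnt_def
    using that assms(8,9) by (intro abs_sum_choices_sigma_nbhd_le[OF assms(4,10,2)]) auto
  then have "\<bar>\<Sum>v\<in>V. S v\<bar> \<le> real cnt * (\<Sum>v\<in>V. bound v)"
    by (auto simp: sum_distrib_left intro!: order_trans[OF sum_abs] sum_mono)
  moreover have "real cnt > 0" "D > 0"
    using assms(1-3) by (simp_all add: cnt_def D_def)
  ultimately have "\<bar>\<Sum>v\<in>V. S v\<bar> / (real cnt * D) \<le> real cnt * (\<Sum>v\<in>V. bound v) / (real cnt * D)"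
    by (intro divide_right_mono) simp_all
  also have "\<dots> = 1 / D * (\<Sum>v\<in>V. bound v)"
    using \<open>real cnt > 0\<close> by simp
  finally show ?thesis
    using \<open>real cnt > 0\<close> \<open>D > 0\<close>
    by (simp only: expectation abs_divide abs_of_pos mult_pos_pos bound_def D_def)
qed

end
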